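(* Let $n\ge1$, equip $\{0,1\}^n$ with the uniform probability measure, and for $k=0,\dots,n$ let $\mathcal{F}^*_k$ be the product of the trivial $\sigma$-algebra on $\{0,1\}^k$ (first $k$ coordinates) and the full $\sigma$-algebra on $\{0,1\}^{n-k}$ (last $n-k$ coordinates); put $\mathcal{F}^*_{n+1}=\mathcal{F}^*_n$, and write $\mathbb{E}^*_k=\mathbb{E}(\cdot\mid\mathcal{F}^*_k)$. Then there is no constant $C$ (independent of $n$) such that for all $n$ and all $f_0,\dots,f_n\in L^1(\{0,1\}^n)$ satisfying $\mathbb{E}^*_{k+1}f_k=0$ for $k=0,\dots,n$, one has \[C\,\mathbb{E}\Big(\sum_{k=0}^n|f_k|^2\Big)^{1/2}\ge\mathbb{E}\Big(\sum_{k=0}^n|\mathbb{E}^*_kf_k|^2\Big)^{1/2}.\] *)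

theory Defs
  imports Complex_Main
begin

text \<open>The discrete cube {0,1}^n, points represented as boolean lists of length n
  (coordinate i is the i-th list entry, True = 1).\<close>
definition cube :: "nat \<Rightarrow> bool list set" where
  "cube n = {xs. length xs = n}"

definition cube_exp :: "nat \<Rightarrow> (bool list \<Rightarrow> real) \<Rightarrow> real" where
  "cube_exp n f = (\<Sum>x\<in>cube n. f x) / 2 ^ n"

text \<open>Conditional expectation E(f | F*_k) on {0,1}^n, where F*_k is trivial on the
  first k coordinates and full on the last n-k; F*_{k} = F*_n for k > n.
  Since every point has positive mass, it is given pointwise by averaging over the
  first min k n coordinates.\<close>
definition cexp_star :: "nat \<Rightarrow> nat \<Rightarrow> (bool list \<Rightarrow> real) \<Rightarrow> bool list \<Rightarrow> real" where
  "cexp_star n k f x =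
     (\<Sum>y\<in>cube (min k n). f (y @ drop (min k n) x)) / 2 ^ (min k n)"

end

theory Submission
  imports Defs
begin

text \<open>For n = 2m take f_k, k even and k < 2m, to be 2^m times the Rademacher sign of x_k,
  supported on the set A where all odd coordinates of x equal 1 (coordinates counted from 0);
  the other f_k vanish. Since the flip of x_k does not affect A, E*_{k+1} f_k = 0. The square
  function of (f_k) equals \<surd>m 2^m on A (measure 2^-m), so its expectation is \<surd>m. On the
  other hand E*_{2i} f_{2i} has modulus 2^{m-i} on the set where the odd coordinates beyond 2i
  equal 1, and an induction on m shows that the square function of these conditional
  expectations has expectation at least m/4. Hence C \<surd>m \<ge> m/4 for all m, which is impossible.\<close>

lemma finite_cube [simp]: "finite (cube n)"
proof -
  have "cube n = {xs. set xs \<subseteq> UNIV \<and> length xs = n}"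
    by (auto simp: cube_def)
  then show ?thesis
    using finite_lists_length_eq[of "UNIV :: bool set" n] by simp
qed

lemma cube_0: "cube 0 = {[]}"
  by (auto simp: cube_def)

lemma cube_Suc: "cube (Suc n) = (\<lambda>(b, y). b # y) ` (UNIV \<times> cube n)"
  by (auto simp: cube_def image_iff length_Suc_conv)

lemma sum_cube_Suc:
  "(\<Sum>w\<in>cube (Suc n). F w) = (\<Sum>y\<in>cube n. F (True # y) + F (False # y))"
proof -
  have "inj_on (\<lambda>(b, y). b # y) (UNIV \<times> cube n)"
    by (auto simp: inj_on_def)
  then have "(\<Sum>w\<in>cube (Suc n). F w) = (\<Sum>(b, y)\<in>UNIV \<times> cube n. F (b # y))"
    unfolding cube_Suc by (simp add: sum.reindex split_def)
  also have "\<dots> = (\<Sum>b\<in>UNIV. \<Sum>y\<in>cube n. F (b # y))"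
    by (simp add: sum.cartesian_product split_def)
  finally show ?thesis
    by (simp add: UNIV_bool sum.distrib add.commute)
qed

lemma sum_cube_append:
  "(\<Sum>w\<in>cube (a + b). F w) = (\<Sum>y\<in>cube a. \<Sum>z\<in>cube b. F (y @ z))"
  by (induction a arbitrary: F) (simp_all add: cube_0 sum_cube_Suc sum.distrib)

lemma sum_cube_1: "(\<Sum>z\<in>cube 1. F z) = F [True] + F [False]"
  using sum_cube_Suc[where n = 0] by (simp add: cube_0)

lemma sum_atMost_even_lessThan:
  fixes h :: "nat \<Rightarrow> 'a::comm_monoid_add"
  shows "(\<Sum>k\<le>2 * m. if even k \<and> k < 2 * m then h k else 0) = (\<Sum>i<m. h (2 * i))"
proof -
  have "(\<Sum>k\<le>2 * m. if even k \<and> k < 2 * m then h k else 0)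
      = (\<Sum>k<2 * m. if even k then h k else 0)"
    unfolding lessThan_Suc_atMost[symmetric] sum.lessThan_Suc
    by (auto intro: sum.cong)
  also have "\<dots> = (\<Sum>i<m. h (2 * i))"
    by (induction m) auto
  finally show ?thesis .
qed

lemma power2_two_power: "((2::real) ^ k)\<^sup>2 = 4 ^ k"
proof -
  have "((2::real) ^ k)\<^sup>2 = 2 ^ (2 * k)"
    by (simp add: power_mult[symmetric] mult.commute)
  then show ?thesis
    by (simp add: power_mult)
qed

lemma sqrt_four_power: "sqrt ((4::real) ^ k) = 2 ^ k"
  by (simp add: real_sqrt_power)

fun odd_coords_true :: "bool list \<Rightarrow> bool" where
  "odd_coords_true [] = True"
| "odd_coords_true [a] = True"
| "odd_coords_true (a # b # xs) = (b \<and> odd_coords_true xs)"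

lemma odd_coords_true_append:
  "even (length xs) \<Longrightarrow> odd_coords_true (xs @ ys) = (odd_coords_true xs \<and> odd_coords_true ys)"
  by (induction xs rule: odd_coords_true.induct) auto

lemma sum_cube_odd_coords_true:
  "(\<Sum>y\<in>cube (2 * i). of_bool (odd_coords_true y) :: real) = 2 ^ i"
proof (induction i)
  case (Suc i)
  have "2 * Suc i = Suc (Suc (2 * i))"
    by simp
  then show ?case
    by (simp add: sum_cube_Suc sum.distrib Suc.IH)
qed (simp add: cube_0)

definition rademacher :: "bool \<Rightarrow> real" where
  "rademacher b = (if b then 1 else -1)"

definition spike :: "nat \<Rightarrow> nat \<Rightarrow> bool list \<Rightarrow> real" where
  "spike m k x =
     (if even k \<and> k < 2 * m then 2 ^ m * rademacher (x ! k) * of_bool (odd_coords_true x) else 0)"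

lemma spike_eq_zero: "\<not> (even k \<and> k < 2 * m) \<Longrightarrow> spike m k = (\<lambda>_. 0)"
  by (auto simp: spike_def fun_eq_iff)

lemma cexp_star_zero [simp]: "cexp_star n k (\<lambda>_. 0) x = 0"
  by (simp add: cexp_star_def)

lemma cexp_star_spike_Suc:
  assumes x: "x \<in> cube (2 * m)"
  shows "cexp_star (2 * m) (Suc k) (spike m k) x = 0"
proof (cases "even k \<and> k < 2 * m")
  case True
  then have "Suc k < 2 * m"
    by presburger
  then obtain d r where dr: "drop (Suc k) x = d # r"
    using x by (cases "drop (Suc k) x") (auto simp: cube_def)
  have "(\<Sum>y\<in>cube (k + 1). spike m k (y @ drop (Suc k) x))
      = (\<Sum>y\<in>cube k. \<Sum>z\<in>cube 1. spike m k ((y @ z) @ drop (Suc k) x))"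
    by (rule sum_cube_append)
  also have "\<dots> = 0"
  proof (rule sum.neutral, rule ballI)
    fix y
    assume "y \<in> cube k"
    then have "length y = k"
      by (simp add: cube_def)
    \<comment> \<open>flipping coordinate k negates the sign and, k being even, keeps the support\<close>
    then show "(\<Sum>z\<in>cube 1. spike m k ((y @ z) @ drop (Suc k) x)) = 0"
      using True dr
      by (simp only: sum_cube_1) (simp add: spike_def odd_coords_true_append nth_append rademacher_def)
  qed
  finally show ?thesis
    using \<open>Suc k < 2 * m\<close> by (simp add: cexp_star_def)
qed (simp add: spike_eq_zero)

lemma cexp_star_spike:
  assumes x: "x \<in> cube (2 * m)" and i: "i < m"
  shows "cexp_star (2 * m) (2 * i) (spike m (2 * i)) x
       = 2 ^ (m - i) * rademacher (x ! (2 * i)) * of_bool (odd_coords_true (drop (2 * i) x))"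
proof -
  define c where "c = 2 ^ m * rademacher (x ! (2 * i)) * of_bool (odd_coords_true (drop (2 * i) x))"
  have "spike m (2 * i) (y @ drop (2 * i) x) = c * of_bool (odd_coords_true y)"
    if "y \<in> cube (2 * i)" for y
    using that x i
    by (auto simp: cube_def spike_def c_def odd_coords_true_append nth_append)
  then have "(\<Sum>y\<in>cube (2 * i). spike m (2 * i) (y @ drop (2 * i) x)) = c * 2 ^ i"
    by (simp add: sum_distrib_left[symmetric] sum_cube_odd_coords_true)
  moreover have "(2::real) ^ (2 * i) = 2 ^ i * 2 ^ i"
    by (simp add: mult_2 power_add)
  ultimately show ?thesis
    using i by (simp add: cexp_star_def c_def power_diff)
qed

lemma sum_square_spike:
  "(\<Sum>k\<le>2 * m. \<bar>spike m k x\<bar> ^ 2) = real m * 4 ^ m * of_bool (odd_coords_true x)"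
proof -
  have "\<bar>spike m k x\<bar> ^ 2 = (if even k \<and> k < 2 * m then 4 ^ m * of_bool (odd_coords_true x) else 0)"
    for k
    by (simp add: spike_def rademacher_def power_mult_distrib power2_two_power)
  then show ?thesis
    by (simp add: sum_atMost_even_lessThan)
qed

definition tail_weight :: "nat \<Rightarrow> bool list \<Rightarrow> real" where
  "tail_weight m x = (\<Sum>i<m. 4 ^ (m - i) * of_bool (odd_coords_true (drop (2 * i) x)))"

lemma sum_square_cexp_star_spike:
  assumes x: "x \<in> cube (2 * m)"
  shows "(\<Sum>k\<le>2 * m. \<bar>cexp_star (2 * m) k (spike m k) x\<bar> ^ 2) = tail_weight m x"
proof -
  have "\<bar>cexp_star (2 * m) k (spike m k) x\<bar> ^ 2
      = (if even k \<and> k < 2 * m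
         then 4 ^ (m - k div 2) * of_bool (odd_coords_true (drop (2 * (k div 2)) x)) else 0)"
    for k
  proof (cases "even k \<and> k < 2 * m")
    case True
    then obtain i where "k = 2 * i" "i < m"
      by (auto elim!: evenE)
    then show ?thesis
      using cexp_star_spike[OF x \<open>i < m\<close>]
      by (simp add: rademacher_def power_mult_distrib power2_two_power)
  qed (auto simp: spike_eq_zero)
  then show ?thesis
    by (simp add: sum_atMost_even_lessThan tail_weight_def)
qed

lemma tail_weight_Suc:
  "tail_weight (Suc m) x = 4 ^ Suc m * of_bool (odd_coords_true x) + tail_weight m (drop 2 x)"
  unfolding tail_weight_def sum.lessThan_Suc_shift by simp

lemma tail_weight_nonneg: "0 \<le> tail_weight m x"
  unfolding tail_weight_def by (intro sum_nonneg) auto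

lemma tail_weight_le: "tail_weight m x \<le> 4 ^ Suc m"
proof (induction m arbitrary: x)
  case (Suc m)
  have "(4::real) ^ Suc m * of_bool (odd_coords_true x) \<le> 4 ^ Suc m"
    by simp
  moreover have "(4::real) ^ Suc m + 4 ^ Suc m \<le> 4 ^ Suc (Suc m)"
    by simp
  ultimately show ?case
    using Suc.IH[of "drop 2 x"] unfolding tail_weight_Suc by linarith
qed (simp add: tail_weight_def)

lemma sqrt_add_ge:
  fixes q a :: real
  assumes "0 \<le> q" "q \<le> a"
  shows "sqrt q + sqrt a / 4 \<le> sqrt (a + q)"
proof (rule real_le_rsqrt)
  have "sqrt q * sqrt a \<le> sqrt a * sqrt a"
    using assms by (intro mult_right_mono) auto
  then show "(sqrt q + sqrt a / 4) ^ 2 \<le> a + q"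
    using assms by (simp add: power2_eq_square algebra_simps)
qed

lemma sum_sqrt_tail_weight_ge:
  "real m * 4 ^ m \<le> 4 * (\<Sum>x\<in>cube (2 * m). sqrt (tail_weight m x))"
proof (induction m)
  case (Suc m)
  \<comment> \<open>where all odd coordinates are 1, the new term 4^{m+1} \<ge> tail_weight m z raises the
    square root by at least 2^{m-1}\<close>
  have step: "4 * sqrt (tail_weight m z) + 2 ^ m * of_bool (odd_coords_true z)
      \<le> 2 * sqrt (4 ^ Suc m * of_bool (odd_coords_true z) + tail_weight m z)
        + 2 * sqrt (tail_weight m z)" for z
  proof (cases "odd_coords_true z")
    case True
    have "sqrt (tail_weight m z) + sqrt (4 ^ Suc m) / 4 \<le> sqrt (4 ^ Suc m + tail_weight m z)"
      using tail_weight_nonneg tail_weight_le by (rule sqrt_add_ge)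
    then show ?thesis
      using True by (simp only: sqrt_four_power) simp
  qed simp
  have "2 * Suc m = Suc (Suc (2 * m))"
    by simp
  then have "(\<Sum>x\<in>cube (2 * Suc m). sqrt (tail_weight (Suc m) x))
      = (\<Sum>z\<in>cube (2 * m). 2 * sqrt (4 ^ Suc m * of_bool (odd_coords_true z) + tail_weight m z)
          + 2 * sqrt (tail_weight m z))"
    by (simp add: sum_cube_Suc tail_weight_Suc)
  also have "\<dots> \<ge> (\<Sum>z\<in>cube (2 * m). 4 * sqrt (tail_weight m z) + 2 ^ m * of_bool (odd_coords_true z))"
    by (intro sum_mono step)
  finally have "4 * (\<Sum>z\<in>cube (2 * m). sqrt (tail_weight m z)) + 4 ^ m
      \<le> (\<Sum>x\<in>cube (2 * Suc m). sqrt (tail_weight (Suc m) x))"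
    by (simp add: sum.distrib sum_distrib_left[symmetric] sum_cube_odd_coords_true
        power2_two_power[symmetric] power2_eq_square)
  then show ?case
    using Suc.IH by (simp add: algebra_simps)
qed (simp add: tail_weight_def)

lemma cube_exp_square_function_spike:
  "cube_exp (2 * m) (\<lambda>x. sqrt (\<Sum>k\<le>2 * m. \<bar>spike m k x\<bar> ^ 2)) = sqrt (real m)"
proof -
  have "sqrt (\<Sum>k\<le>2 * m. \<bar>spike m k x\<bar> ^ 2) = sqrt (real m) * 2 ^ m * of_bool (odd_coords_true x)"
    for x
    unfolding sum_square_spike by (simp add: real_sqrt_mult sqrt_four_power)
  then show ?thesis
    by (simp add: cube_exp_def sum_distrib_left[symmetric] sum_cube_odd_coords_true
        power_mult power2_two_power[symmetric] power2_eq_square)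
qed

lemma cube_exp_square_function_cexp_star_spike:
  "real m / 4 \<le> cube_exp (2 * m) (\<lambda>x. sqrt (\<Sum>k\<le>2 * m. \<bar>cexp_star (2 * m) k (spike m k) x\<bar> ^ 2))"
proof -
  have "cube_exp (2 * m) (\<lambda>x. sqrt (\<Sum>k\<le>2 * m. \<bar>cexp_star (2 * m) k (spike m k) x\<bar> ^ 2))
      = (\<Sum>x\<in>cube (2 * m). sqrt (tail_weight m x)) / 4 ^ m"
    unfolding cube_exp_def power_mult
    by (simp only: sum_square_cexp_star_spike cong: sum.cong) simp
  moreover have "real m / 4 * 4 ^ m \<le> (\<Sum>x\<in>cube (2 * m). sqrt (tail_weight m x))"
    using sum_sqrt_tail_weight_ge[of m] by simp
  ultimately show ?thesis
    by (simp only: pos_le_divide_eq zero_less_power zero_less_numeral)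
qed

lemma ex_nat_mult_sqrt_less:
  fixes C c :: real
  assumes "0 < c"
  shows "\<exists>m::nat. 0 < m \<and> C * sqrt (real m) < c * real m"
proof -
  obtain m :: nat where m: "(C / c)\<^sup>2 < real m"
    using reals_Archimedean2 by blast
  then have "0 < real m"
    using zero_le_power2[of "C / c"] by linarith
  have "\<bar>C\<bar> / c < sqrt (real m)"
    using real_sqrt_less_mono[OF m] assms by (simp only: real_sqrt_abs abs_divide)
  then have "\<bar>C\<bar> < c * sqrt (real m)"
    using assms by (simp add: divide_less_eq mult.commute)
  then have "\<bar>C\<bar> * sqrt (real m) < c * sqrt (real m) * sqrt (real m)"
    using \<open>0 < real m\<close> by (intro mult_strict_right_mono) simp_all
  moreover have "C * sqrt (real m) \<le> \<bar>C\<bar> * sqrt (real m)"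
    by (intro mult_right_mono) simp_all
  moreover have "c * sqrt (real m) * sqrt (real m) = c * real m"
    by (simp add: mult.assoc)
  ultimately have "C * sqrt (real m) < c * real m"
    by linarith
  then show ?thesis
    using \<open>0 < real m\<close> by auto
qed

lemma spike_violates_bound:
  fixes C :: real
  shows "\<exists>n f. n \<ge> 1 \<and> (\<forall>k\<le>n. \<forall>x\<in>cube n. cexp_star n (k + 1) (f k) x = 0) \<and>
    C * cube_exp n (\<lambda>x. sqrt (\<Sum>k\<le>n. \<bar>f k x\<bar> ^ 2))
      < cube_exp n (\<lambda>x. sqrt (\<Sum>k\<le>n. \<bar>cexp_star n k (f k) x\<bar> ^ 2))"
proof -
  obtain m :: nat where "0 < m" and m: "C * sqrt (real m) < 1 / 4 * real m"
    using ex_nat_mult_sqrt_less[of "1 / 4" C] by auto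
  show ?thesis
  proof (intro exI conjI)
    show "2 * m \<ge> 1"
      using \<open>0 < m\<close> by simp
    show "\<forall>k\<le>2 * m. \<forall>x\<in>cube (2 * m). cexp_star (2 * m) (k + 1) (spike m k) x = 0"
      using cexp_star_spike_Suc by simp
    show "C * cube_exp (2 * m) (\<lambda>x. sqrt (\<Sum>k\<le>2 * m. \<bar>spike m k x\<bar> ^ 2))
        < cube_exp (2 * m) (\<lambda>x. sqrt (\<Sum>k\<le>2 * m. \<bar>cexp_star (2 * m) k (spike m k) x\<bar> ^ 2))"
      using m cube_exp_square_function_cexp_star_spike[of m]
      unfolding cube_exp_square_function_spike by simp
  qed
qed

theorem theorem1p4:
  shows "\<not> (\<exists>C::real. \<forall>n::nat. \<forall>f :: nat \<Rightarrow> bool list \<Rightarrow> real.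
            n \<ge> 1 \<longrightarrow>
            (\<forall>k\<le>n. \<forall>x\<in>cube n. cexp_star n (k + 1) (f k) x = 0) \<longrightarrow>
            C * cube_exp n (\<lambda>x. sqrt (\<Sum>k\<le>n. \<bar>f k x\<bar> ^ 2))
              \<ge> cube_exp n (\<lambda>x. sqrt (\<Sum>k\<le>n. \<bar>cexp_star n k (f k) x\<bar> ^ 2)))"
  using spike_violates_bound by (blast dest: leD)

end
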